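(* Let $(E,\|\cdot\|)$ be a real Banach space with metric $d(x,y)=\|x-y\|$, $I=[a,b]$ a closed real interval, $E_0=C(I,E)$ the space of continuous functions $I\to E$ with the supremum norm $\|\varphi\|_0=\sup_{t\in I}\|\varphi(t)\|$ and metric $D(\varphi,\xi)=\|\varphi-\xi\|_0$, and fix $c\in I$. Let $\mathcal{K}$ be the set of constant functions in $E_0$. Let $\alpha:E\times E\to[0,\infty)$, $\mathcal{T}:E_0\to E$ and $k\in[0,1)$ satisfy: (1) ($(\alpha,k)$-contractive) $\alpha(\varphi(c),\mathcal{T}\varphi)\,\alpha(\xi(c),\mathcal{T}\xi)\,d(\mathcal{T}\varphi,\mathcal{T}\xi)\le k\,D(\varphi,\xi)$ for all $\varphi,\xi\in E_0$; (2) ($\alpha$-admissible) for all $\varphi,\xi\in E_0$, $\alpha(\varphi(c),\xi(c))\ge1$ implies $\alpha(\mathcal{T}\varphi,\mathcal{T}\xi)\ge1$; (3) ($E_0$-closed) whenever $(\varphi_n)_{n\ge0}$ in $E_0$ and $\varphi\in E_0$ satisfy $\alpha(\varphi_n(c),\mathcal{T}\varphi_n)\ge1$ for all $n$ and $D(\varphi_n,\varphi)\to0$, then $\alpha(\varphi(c),\mathcal{T}\varphi)\ge1$; (4) ($E_0$-starting) there exists $\varphi_0\in E_0$ with $\alpha(\varphi_0(c),\mathcal{T}\varphi_0)\ge1$. Then: (i) there exists $\varphi_0\in\mathcal{K}$ with $\alpha(\varphi_0(c),\mathcal{T}\varphi_0)\ge1$; (ii) for every $\varphi_0\in\mathcal{K}$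 with $\alpha(\varphi_0(c),\mathcal{T}\varphi_0)\ge1$, the sequence $(\varphi_n)_{n\ge0}$ in $\mathcal{K}$ defined by $\varphi_{n+1}(c)=\mathcal{T}\varphi_n$ ($n\ge0$) $D$-converges to some $\varphi^*\in\mathcal{K}$ with $\mathcal{T}\varphi^*=\varphi^*(c)$ and $\alpha(\varphi^*(c),\mathcal{T}\varphi^* )\ge1$; (iii) there is exactly one $\varphi^*\in\mathcal{K}$ with $\mathcal{T}\varphi^*=\varphi^*(c)$ and $\alpha(\varphi^*(c),\mathcal{T}\varphi^* )\ge1$.
   Context: A point $\varphi\in E_0$ with $\mathcal{T}\varphi=\varphi(c)$ is called a PPF dependent fixed point of $\mathcal{T}$. Elements of $\mathcal{K}$ are determined by their value at $c$, so the sequence in (ii) is well defined. *)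

theory Defs
  imports "HOL-Analysis.Analysis"
begin

text \<open>E_0 = C([a,b],E), represented extensionally: continuous on [a,b], zero outside.\<close>
definition E0 :: "real \<Rightarrow> real \<Rightarrow> (real \<Rightarrow> 'e::real_normed_vector) set" where
  "E0 a b = {f. continuous_on {a..b} f \<and> (\<forall>t. t \<notin> {a..b} \<longrightarrow> f t = 0)}"

definition supD :: "real \<Rightarrow> real \<Rightarrow> (real \<Rightarrow> 'e::real_normed_vector) \<Rightarrow> (real \<Rightarrow> 'e) \<Rightarrow> real" where
  "supD a b f g = (SUP t\<in>{a..b}. norm (f t - g t))"

definition Kc :: "real \<Rightarrow> real \<Rightarrow> (real \<Rightarrow> 'e::real_normed_vector) set" where
  "Kc a b = {f \<in> E0 a b. \<exists>x. \<forall>t\<in>{a..b}. f t = x}"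

end

theory Submission
  imports Defs
begin

text \<open>
  A function in \<open>Kc a b\<close> is determined by its value at \<open>c\<close>, and the supremum distance of two
  of them is the distance of their values. So the whole problem lives in \<open>E\<close>, for the map
  \<open>T_const x = T (const x)\<close> on \<open>S = {x. \<alpha> x (T_const x) \<ge> 1}\<close>: there \<open>T_const\<close> is a
  \<open>k\<close>-contraction (both weights are \<open>\<ge> 1\<close>), it maps \<open>S\<close> into itself (admissibility), and \<open>S\<close>
  is closed and nonempty. Picard iteration and Banach's fixed point theorem on the complete set
  \<open>S\<close> then give all three claims.
\<close>

lemma convergent_if_norm_diff_contracts:
  fixes x :: "nat \<Rightarrow> 'a::banach"
  assumes k: "0 \<le> k" "k < 1"
    and step: "\<And>n. norm (x (Suc (Suc n)) - x (Suc n)) \<le> k * norm (x (Suc n) - x n)"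
  shows "convergent x"
proof -
  define d where "d = norm (x 1 - x 0)"
  have geometric: "norm (x (Suc n) - x n) \<le> d * k ^ n" for n
  proof (induction n)
    case 0
    then show ?case by (simp add: d_def)
  next
    case (Suc n)
    have "norm (x (Suc (Suc n)) - x (Suc n)) \<le> k * norm (x (Suc n) - x n)" by (rule step)
    also have "\<dots> \<le> k * (d * k ^ n)" using Suc k by (simp add: mult_left_mono)
    finally show ?case by (simp add: algebra_simps)
  qed
  have "summable (\<lambda>n. d * k ^ n)" using k by (simp add: summable_geometric)
  then have "summable (\<lambda>n. norm (x (Suc n) - x n))"
    by (rule summable_comparison_test') (simp add: geometric)
  then have "summable (\<lambda>n. x (Suc n) - x n)" by (rule summable_norm_cancel)
  then have "convergent (\<lambda>n. \<Sum>i<n. x (Suc i) - x i)"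
    by (simp add: summable_iff_convergent)
  then have "convergent (\<lambda>n. x n - x 0)" by (simp add: sum_lessThan_telescope)
  then have "convergent (\<lambda>n. (x n - x 0) + x 0)" by (intro convergent_add convergent_const)
  then show ?thesis by simp
qed

lemma contraction_orbit_tendsto_fixpoint:
  fixes f :: "'a::banach \<Rightarrow> 'a"
  assumes S: "closed S" "f ` S \<subseteq> S"
    and k: "0 \<le> k" "k < 1"
    and contraction: "\<And>x y. x \<in> S \<Longrightarrow> y \<in> S \<Longrightarrow> dist (f x) (f y) \<le> k * dist x y"
    and orbit: "x 0 \<in> S" "\<And>n. x (Suc n) = f (x n)"
  obtains l where "l \<in> S" "x \<longlonglongrightarrow> l" "f l = l"
proof -
  have x_in_S: "x n \<in> S" for n
    by (induction n) (use orbit S(2) in auto)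
  have "convergent x"
  proof (rule convergent_if_norm_diff_contracts[OF k])
    show "norm (x (Suc (Suc n)) - x (Suc n)) \<le> k * norm (x (Suc n) - x n)" for n
      using contraction[OF x_in_S x_in_S, of "Suc n" n] by (simp add: orbit(2) dist_norm)
  qed
  then obtain l where lim: "x \<longlonglongrightarrow> l" by (auto simp: convergent_def)
  have "l \<in> S" using closed_sequentially[OF S(1)] x_in_S lim by blast
  have "(\<lambda>n. dist (f (x n)) (f l)) \<longlonglongrightarrow> 0"
  proof (rule tendsto_sandwich[of "\<lambda>_. 0" _ _ "\<lambda>n. k * dist (x n) l"])
    show "\<forall>\<^sub>F n in sequentially. dist (f (x n)) (f l) \<le> k * dist (x n) l"
      using contraction[OF x_in_S \<open>l \<in> S\<close>] by simp
    show "(\<lambda>n. k * dist (x n) l) \<longlonglongrightarrow> 0"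
      using tendsto_mult_right_zero[OF tendsto_dist_iff[THEN iffD1, OF lim]] by simp
  qed simp_all
  then have "(\<lambda>n. x (Suc n)) \<longlonglongrightarrow> f l"
    unfolding orbit(2) by (rule tendsto_dist_iff[THEN iffD2])
  moreover have "(\<lambda>n. x (Suc n)) \<longlonglongrightarrow> l" using lim by (rule LIMSEQ_Suc)
  ultimately have "f l = l" by (rule LIMSEQ_unique)
  with \<open>l \<in> S\<close> lim show thesis by (rule that)
qed

lemma le_if_weighted_le:
  fixes p q d r :: real
  assumes "1 \<le> p" "1 \<le> q" "0 \<le> d" "p * q * d \<le> r"
  shows "d \<le> r"
proof -
  have "1 * 1 \<le> p * q" using assms(1,2) by (intro mult_mono) auto
  then have "1 * d \<le> p * q * d" using assms(3) by (intro mult_right_mono) auto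
  with assms(4) show ?thesis by linarith
qed

definition const_fun :: "real \<Rightarrow> real \<Rightarrow> 'e::real_normed_vector \<Rightarrow> real \<Rightarrow> 'e" where
  "const_fun a b x = (\<lambda>t. if t \<in> {a..b} then x else 0)"

lemma const_fun_in_Kc: "const_fun a b x \<in> Kc a b"
proof -
  have "continuous_on {a..b} (const_fun a b x)"
    by (rule continuous_on_cong[THEN iffD2, OF refl, of _ _ "\<lambda>_. x"]) (auto simp: const_fun_def)
  then show ?thesis by (auto simp: Kc_def E0_def const_fun_def)
qed

lemma const_fun_apply: "t \<in> {a..b} \<Longrightarrow> const_fun a b x t = x"
  by (simp add: const_fun_def)

lemma Kc_eq_const_fun: "f \<in> Kc a b \<Longrightarrow> c \<in> {a..b} \<Longrightarrow> f = const_fun a b (f c)"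
  unfolding Kc_def E0_def const_fun_def by auto

lemma supD_const_fun:
  assumes "a \<le> b"
  shows "supD a b (const_fun a b x) (const_fun a b y) = norm (x - y)"
  using assms by (simp add: supD_def const_fun_apply cong: SUP_cong_simp)

locale PPF_alpha_contraction =
  fixes a b c k :: real
    and \<alpha> :: "'e::banach \<Rightarrow> 'e \<Rightarrow> real"
    and T :: "(real \<Rightarrow> 'e) \<Rightarrow> 'e"
  assumes c: "c \<in> {a..b}"
    and k: "0 \<le> k" "k < 1"
    and contr: "\<And>\<phi> \<xi>. \<phi> \<in> E0 a b \<Longrightarrow> \<xi> \<in> E0 a b \<Longrightarrow>
        \<alpha> (\<phi> c) (T \<phi>) * \<alpha> (\<xi> c) (T \<xi>) * dist (T \<phi>) (T \<xi>) \<le> k * supD a b \<phi> \<xi>"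
    and admissible: "\<And>\<phi> \<xi>. \<phi> \<in> E0 a b \<Longrightarrow> \<xi> \<in> E0 a b \<Longrightarrow>
        \<alpha> (\<phi> c) (\<xi> c) \<ge> 1 \<Longrightarrow> \<alpha> (T \<phi>) (T \<xi>) \<ge> 1"
    and closed: "\<And>\<phi>s \<phi>. (\<forall>n. \<phi>s n \<in> E0 a b) \<Longrightarrow> \<phi> \<in> E0 a b \<Longrightarrow>
        (\<forall>n. \<alpha> (\<phi>s n c) (T (\<phi>s n)) \<ge> 1) \<Longrightarrow>
        (\<lambda>n. supD a b (\<phi>s n) \<phi>) \<longlonglongrightarrow> 0 \<Longrightarrow> \<alpha> (\<phi> c) (T \<phi>) \<ge> 1"
    and starting: "\<exists>\<phi>0 \<in> E0 a b. \<alpha> (\<phi>0 c) (T \<phi>0) \<ge> 1"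
begin

lemma a_le_b: "a \<le> b"
  using c by simp

definition T_const :: "'e \<Rightarrow> 'e" where
  "T_const x = T (const_fun a b x)"

definition starting_points :: "'e set" where
  "starting_points = {x. 1 \<le> \<alpha> x (T_const x)}"

lemma T_eq_T_const: "\<phi> \<in> Kc a b \<Longrightarrow> T \<phi> = T_const (\<phi> c)"
  unfolding T_const_def using Kc_eq_const_fun[OF _ c] by metis

lemma alpha_ge_1_iff_starting_point:
  "\<phi> \<in> Kc a b \<Longrightarrow> 1 \<le> \<alpha> (\<phi> c) (T \<phi>) \<longleftrightarrow> \<phi> c \<in> starting_points"
  by (simp add: T_eq_T_const starting_points_def)

lemma const_fun_E0: "const_fun a b x \<in> E0 a b"
  using const_fun_in_Kc by (auto simp: Kc_def)

lemma T_const_contraction: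
  assumes "x \<in> starting_points" "y \<in> starting_points"
  shows "dist (T_const x) (T_const y) \<le> k * dist x y"
  using le_if_weighted_le[OF _ _ zero_le_dist contr[OF const_fun_E0 const_fun_E0]] assms
  by (simp add: starting_points_def T_const_def const_fun_apply[OF c] supD_const_fun[OF a_le_b] dist_norm)

lemma T_const_starting_points: "T_const ` starting_points \<subseteq> starting_points"
  using admissible[OF const_fun_E0 const_fun_E0]
  by (auto simp: starting_points_def T_const_def const_fun_apply[OF c])

lemma closed_starting_points: "closed starting_points"
proof (rule closed_sequential_limits[THEN iffD2], intro allI impI)
  fix x l
  assume "(\<forall>n. x n \<in> starting_points) \<and> x \<longlonglongrightarrow> l"
  then show "l \<in> starting_points"
    using closed[of "\<lambda>n. const_fun a b (x n)" "const_fun a b l"]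
    by (simp add: const_fun_E0 starting_points_def T_const_def const_fun_apply[OF c]
        supD_const_fun[OF a_le_b] LIM_zero_iff tendsto_norm_zero)
qed

lemma starting_points_nonempty: "starting_points \<noteq> {}"
proof -
  obtain \<phi>0 where "\<phi>0 \<in> E0 a b" "1 \<le> \<alpha> (\<phi>0 c) (T \<phi>0)" using starting by blast
  then have "T \<phi>0 \<in> starting_points"
    using admissible[OF _ const_fun_E0]
    by (simp add: starting_points_def T_const_def const_fun_apply[OF c])
  then show ?thesis by blast
qed

lemma ex_starting_point_in_Kc: "\<exists>\<phi> \<in> Kc a b. 1 \<le> \<alpha> (\<phi> c) (T \<phi>)"
proof -
  obtain x where "x \<in> starting_points" using starting_points_nonempty by blast
  then show ?thesis
    by (intro bexI[of _ "const_fun a b x"])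
      (simp_all add: const_fun_in_Kc T_eq_T_const const_fun_apply[OF c] starting_points_def)
qed

lemma PPF_iteration_converges:
  assumes "\<And>n. \<phi>s n \<in> Kc a b" "\<And>n. \<phi>s (Suc n) c = T (\<phi>s n)"
    and "1 \<le> \<alpha> (\<phi>s 0 c) (T (\<phi>s 0))"
  shows "\<exists>\<phi>' \<in> Kc a b. (\<lambda>n. supD a b (\<phi>s n) \<phi>') \<longlonglongrightarrow> 0
           \<and> T \<phi>' = \<phi>' c \<and> 1 \<le> \<alpha> (\<phi>' c) (T \<phi>')"
proof -
  define x where "x n = \<phi>s n c" for n
  have orbit: "x (Suc n) = T_const (x n)" for n
    unfolding x_def using assms(2)[of n] T_eq_T_const[OF assms(1)] by simp
  have "x 0 \<in> starting_points"
    unfolding x_def using alpha_ge_1_iff_starting_point[OF assms(1)] assms(3) by simp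
  then obtain l where l: "l \<in> starting_points" "x \<longlonglongrightarrow> l" "T_const l = l"
    using contraction_orbit_tendsto_fixpoint[OF closed_starting_points T_const_starting_points k
        T_const_contraction, of x] orbit by blast
  have "\<phi>s n = const_fun a b (x n)" for n
    unfolding x_def using Kc_eq_const_fun[OF assms(1) c] .
  then have "(\<lambda>n. supD a b (\<phi>s n) (const_fun a b l)) \<longlonglongrightarrow> 0"
    using l(2) by (simp add: supD_const_fun[OF a_le_b] LIM_zero_iff tendsto_norm_zero)
  with l(1,3) show ?thesis
    by (intro bexI[of _ "const_fun a b l"])
      (simp_all add: const_fun_in_Kc T_eq_T_const const_fun_apply[OF c] starting_points_def)
qed

lemma ex1_PPF_fixpoint_in_Kc:
  "\<exists>!\<phi>'. \<phi>' \<in> Kc a b \<and> T \<phi>' = \<phi>' c \<and> 1 \<le> \<alpha> (\<phi>' c) (T \<phi>')"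
proof -
  have "complete starting_points"
    using closed_starting_points by (simp add: complete_eq_closed)
  then obtain x where x: "x \<in> starting_points" "T_const x = x"
    and unique: "\<And>y. y \<in> starting_points \<Longrightarrow> T_const y = y \<Longrightarrow> y = x"
    using Banach_fix[OF _ starting_points_nonempty k T_const_starting_points T_const_contraction]
    by blast
  show ?thesis
  proof
    show "const_fun a b x \<in> Kc a b \<and> T (const_fun a b x) = const_fun a b x c
        \<and> 1 \<le> \<alpha> (const_fun a b x c) (T (const_fun a b x))"
      using x by (simp add: const_fun_in_Kc T_eq_T_const const_fun_apply[OF c] starting_points_def)
  next
    fix \<phi> assume \<phi>: "\<phi> \<in> Kc a b \<and> T \<phi> = \<phi> c \<and> 1 \<le> \<alpha> (\<phi> c) (T \<phi>)"
    then have "\<phi> c \<in> starting_points" "T_const (\<phi> c) = \<phi> c"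
      using alpha_ge_1_iff_starting_point[of \<phi>] T_eq_T_const[of \<phi>] by auto
    then have "\<phi> c = x" by (rule unique)
    with \<phi> show "\<phi> = const_fun a b x" using Kc_eq_const_fun[OF _ c] by blast
  qed
qed

end

theorem theorem6:
  fixes a b c k :: real
    and \<alpha> :: "'e::banach \<Rightarrow> 'e \<Rightarrow> real"
    and T :: "(real \<Rightarrow> 'e) \<Rightarrow> 'e"
  assumes ab: "a \<le> b"
    and c: "c \<in> {a..b}"
    and k: "0 \<le> k" "k < 1"
    and alpha_nonneg: "\<And>x y. \<alpha> x y \<ge> 0"
    and contr: "\<And>\<phi> \<xi>. \<phi> \<in> E0 a b \<Longrightarrow> \<xi> \<in> E0 a b \<Longrightarrow>
        \<alpha> (\<phi> c) (T \<phi>) * \<alpha> (\<xi> c) (T \<xi>) * dist (T \<phi>) (T \<xi>) \<le> k * supD a b \<phi> \<xi>"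
    and admissible: "\<And>\<phi> \<xi>. \<phi> \<in> E0 a b \<Longrightarrow> \<xi> \<in> E0 a b \<Longrightarrow>
        \<alpha> (\<phi> c) (\<xi> c) \<ge> 1 \<Longrightarrow> \<alpha> (T \<phi>) (T \<xi>) \<ge> 1"
    and closed: "\<And>\<phi>s \<phi>. (\<forall>n. \<phi>s n \<in> E0 a b) \<Longrightarrow> \<phi> \<in> E0 a b \<Longrightarrow>
        (\<forall>n. \<alpha> (\<phi>s n c) (T (\<phi>s n)) \<ge> 1) \<Longrightarrow>
        (\<lambda>n. supD a b (\<phi>s n) \<phi>) \<longlonglongrightarrow> 0 \<Longrightarrow> \<alpha> (\<phi> c) (T \<phi>) \<ge> 1"
    and starting: "\<exists>\<phi>0 \<in> E0 a b. \<alpha> (\<phi>0 c) (T \<phi>0) \<ge> 1"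
  shows "(\<exists>\<phi>0 \<in> Kc a b. \<alpha> (\<phi>0 c) (T \<phi>0) \<ge> 1)
    \<and> (\<forall>\<phi>0 \<in> Kc a b. \<alpha> (\<phi>0 c) (T \<phi>0) \<ge> 1 \<longrightarrow>
         (\<forall>\<phi>s. \<phi>s 0 = \<phi>0 \<and> (\<forall>n. \<phi>s n \<in> Kc a b \<and> \<phi>s (Suc n) c = T (\<phi>s n)) \<longrightarrow>
            (\<exists>\<phi>' \<in> Kc a b. (\<lambda>n. supD a b (\<phi>s n) \<phi>') \<longlonglongrightarrow> 0
               \<and> T \<phi>' = \<phi>' c \<and> \<alpha> (\<phi>' c) (T \<phi>') \<ge> 1)))
    \<and> (\<exists>!\<phi>'. \<phi>' \<in> Kc a b \<and> T \<phi>' = \<phi>' c \<and> \<alpha> (\<phi>' c) (T \<phi>') \<ge> 1)"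
proof -
  interpret PPF_alpha_contraction a b c k \<alpha> T
    using c k contr admissible closed starting by unfold_locales
  show ?thesis
  proof (intro conjI ballI allI impI)
    fix \<phi>0 \<phi>s
    assume \<phi>0: "1 \<le> \<alpha> (\<phi>0 c) (T \<phi>0)"
      and \<phi>s: "\<phi>s 0 = \<phi>0 \<and> (\<forall>n. \<phi>s n \<in> Kc a b \<and> \<phi>s (Suc n) c = T (\<phi>s n))"
    show "\<exists>\<phi>' \<in> Kc a b. (\<lambda>n. supD a b (\<phi>s n) \<phi>') \<longlonglongrightarrow> 0
        \<and> T \<phi>' = \<phi>' c \<and> 1 \<le> \<alpha> (\<phi>' c) (T \<phi>')"
      using \<phi>s \<phi>0 by (intro PPF_iteration_converges) simp_all
  qed (fact ex_starting_point_in_Kc ex1_PPF_fixpoint_in_Kc)+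
qed

end
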